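(* Let $Z\subseteq\Sigma^{\mathbb Z}$ be a sofic shift, $f:\mathbb R^n\times Z\to\mathbb R^n$, $(C_1,\dots,C_K)$ a graph-induced covering of $Z$ with presentation $\mathcal G=(S,E)$, $S=\{s_1,\dots,s_K\}$, and let $W:\mathbb R^n\times\{1,\dots,K\}\to\mathbb R$ be a $\mathcal G$-based Lyapunov function for the system $x(k+1)=f(x(k),\sigma^k(\bar z))$. Then the functions $\mathcal V_{\min},\mathcal V_{\max}:\mathbb R^n\times Z\to\mathbb R$, $$\mathcal V_{\min}(x,\bar z)=\min_{j:\ \bar z\in C_j}W(x,j),\qquad \mathcal V_{\max}(x,\bar z)=\max_{j:\ \bar z\in C_j}W(x,j),$$ are both sequence-dependent Lyapunov functions for this system.
   Context: $\Sigma$ nonempty countable alphabet; $\Sigma^{\mathbb Z}$ bi-infinite sequences $\bar z=(z_k)_{k\in\mathbb Z}$; $\sigma(\bar z)_k=z_{k+1}$. A labeled graph is $\mathcal G=(S,E)$, $S$ finite, $E\subseteq S\times S\times\Sigma$; standing assumption: every node has at least one incoming and one outgoing edge. A bi-infinite walk labeled by $\bar z$ is $(e_k)_{k\in\mathbb Z}$, $e_k=(s_k,s_{k+1},z_k)\in E$, starting at $s_0$. $\mathcal Z(\mathcal G)$ / $\mathcal Z(\mathcal G,s)$: labels of all bi-infinite walks / those starting at $s$. Sofic shift: a set $\mathcal Z(\mathcal G)$. Graph-induced covering of $Z$ with presentation $\mathcal G$: a family $(C_1,\dots,C_K)$ with $\mathcal G$ having nodes $s_1,\dots,s_K$, $\mathcal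 Z(\mathcal G)=Z$, $C_j=\mathcal Z(\mathcal G,s_j)$. $\mathcal K_\infty$: continuous strictly increasing unbounded $\alpha:\mathbb R_{\ge0}\to\mathbb R_{\ge0}$ with $\alpha(0)=0$. A $\mathcal G$-based Lyapunov function is $W:\mathbb R^n\times\{1,\dots,K\}\to\mathbb R$ such that there exist $\alpha_1,\alpha_2\in\mathcal K_\infty$, $\gamma\in[0,1)$ with $\alpha_1(|x|)\le W(x,j)\le\alpha_2(|x|)$ for all $x,j$, and $W(f(x,\bar z),l)\le\gamma W(x,j)$ for all $x\in\mathbb R^n$, all edges $(s_j,s_l,i)\in E$ and all $\bar z\in C_j$ with $z_0=i$ and $\sigma(\bar z)\in C_l$. A sequence-dependent Lyapunov function is $\mathcal V:\mathbb R^n\times Z\to\mathbb R$ such that there exist $\alpha_1,\alpha_2\in\mathcal K_\infty$, $\gamma\in[0,1)$ with $\alpha_1(|x|)\le\mathcal V(x,\bar z)\le\alpha_2(|x|)$ and $\mathcal V(f(x,\bar z),\sigma(\bar z))\le\gamma\mathcal V(x,\bar z)$ for all $x\in\mathbb R^n,\bar z\in Z$. *)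

theory Defs
  imports "HOL-Analysis.Analysis"
begin

definition shift :: "(int \<Rightarrow> 'a) \<Rightarrow> (int \<Rightarrow> 'a)" where
  "shift z = (\<lambda>k. z (k + 1))"

definition labeled_graph :: "'v set \<Rightarrow> ('v \<times> 'v \<times> 'a) set \<Rightarrow> bool" where
  "labeled_graph S E \<longleftrightarrow> finite S \<and> E \<subseteq> S \<times> S \<times> UNIV \<and>
     (\<forall>v\<in>S. (\<exists>u i. (u, v, i) \<in> E) \<and> (\<exists>w i. (v, w, i) \<in> E))"

definition walk_labels :: "('v \<times> 'v \<times> 'a) set \<Rightarrow> (int \<Rightarrow> 'a) set" where
  "walk_labels E = {z. \<exists>sq :: int \<Rightarrow> 'v. \<forall>k. (sq k, sq (k + 1), z k) \<in> E}"

definition walk_labels_from :: "('v \<times> 'v \<times> 'a) set \<Rightarrow> 'v \<Rightarrow> (int \<Rightarrow> 'a) set" where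
  "walk_labels_from E v =
     {z. \<exists>sq :: int \<Rightarrow> 'v. sq 0 = v \<and> (\<forall>k. (sq k, sq (k + 1), z k) \<in> E)}"

definition sofic_shift :: "(int \<Rightarrow> 'a) set \<Rightarrow> bool" where
  "sofic_shift Z \<longleftrightarrow> (\<exists>(S :: nat set) E. labeled_graph S E \<and> Z = walk_labels E)"

definition graph_induced_covering ::
  "(int \<Rightarrow> 'a) set \<Rightarrow> (nat \<Rightarrow> (int \<Rightarrow> 'a) set) \<Rightarrow> nat \<Rightarrow> 'v set \<Rightarrow>
   ('v \<times> 'v \<times> 'a) set \<Rightarrow> (nat \<Rightarrow> 'v) \<Rightarrow> bool" where
  "graph_induced_covering Z C K S E s \<longleftrightarrow>
     labeled_graph S E \<and> bij_betw s {1..K} S \<and> walk_labels E = Z \<and>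
     (\<forall>j\<in>{1..K}. C j = walk_labels_from E (s j))"

definition class_K_inf :: "(real \<Rightarrow> real) \<Rightarrow> bool" where
  "class_K_inf \<alpha> \<longleftrightarrow> continuous_on {0..} \<alpha> \<and> strict_mono_on {0..} \<alpha> \<and> \<alpha> 0 = 0 \<and>
     (\<forall>r\<ge>0. \<alpha> r \<ge> 0) \<and> (\<forall>M. \<exists>r\<ge>0. \<alpha> r > M)"

definition G_lyapunov ::
  "('x::real_normed_vector \<Rightarrow> (int \<Rightarrow> 'a) \<Rightarrow> 'x) \<Rightarrow> (nat \<Rightarrow> (int \<Rightarrow> 'a) set) \<Rightarrow> nat \<Rightarrow>
   ('v \<times> 'v \<times> 'a) set \<Rightarrow> (nat \<Rightarrow> 'v) \<Rightarrow> ('x \<Rightarrow> nat \<Rightarrow> real) \<Rightarrow> bool" where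
  "G_lyapunov f C K E s W \<longleftrightarrow>
     (\<exists>\<alpha>1 \<alpha>2 \<gamma>. class_K_inf \<alpha>1 \<and> class_K_inf \<alpha>2 \<and> 0 \<le> \<gamma> \<and> \<gamma> < 1 \<and>
       (\<forall>x. \<forall>j\<in>{1..K}. \<alpha>1 (norm x) \<le> W x j \<and> W x j \<le> \<alpha>2 (norm x)) \<and>
       (\<forall>x. \<forall>j\<in>{1..K}. \<forall>l\<in>{1..K}. \<forall>i. (s j, s l, i) \<in> E \<longrightarrow>
          (\<forall>z\<in>C j. z 0 = i \<longrightarrow> shift z \<in> C l \<longrightarrow> W (f x z) l \<le> \<gamma> * W x j)))"

definition seq_lyapunov ::
  "('x::real_normed_vector \<Rightarrow> (int \<Rightarrow> 'a) \<Rightarrow> 'x) \<Rightarrow> (int \<Rightarrow> 'a) set \<Rightarrow>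
   ('x \<Rightarrow> (int \<Rightarrow> 'a) \<Rightarrow> real) \<Rightarrow> bool" where
  "seq_lyapunov f Z V \<longleftrightarrow>
     (\<exists>\<alpha>1 \<alpha>2 \<gamma>. class_K_inf \<alpha>1 \<and> class_K_inf \<alpha>2 \<and> 0 \<le> \<gamma> \<and> \<gamma> < 1 \<and>
       (\<forall>x. \<forall>z\<in>Z. \<alpha>1 (norm x) \<le> V x z \<and> V x z \<le> \<alpha>2 (norm x)) \<and>
       (\<forall>x. \<forall>z\<in>Z. V (f x z) (shift z) \<le> \<gamma> * V x z))"

end

theory Submission
  imports Defs
begin

text \<open>Shifting the sequence
  moves the walk one edge forward, so the cell minimising \<open>W\<close> at \<open>z\<close> has a successor cell at
  \<open>\<sigma>(z)\<close>, across an edge labelled \<open>z\<^sub>0\<close>, where \<open>W\<close> has dropped by the factor \<open>\<gamma>\<close>; dually, the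
  cell maximising \<open>W\<close> at \<open>\<sigma>(z)\<close> has such a predecessor cell at \<open>z\<close>. The \<open>\<K>\<^sub>\<infinity>\<close> bounds pass to
  minima and maxima because the index sets are finite and, \<open>Z\<close> being covered by the cells,
  nonempty.\<close>

lemma walk_labels_from_shift:
  assumes "z \<in> walk_labels_from E v"
  obtains w where "(v, w, z 0) \<in> E" and "shift z \<in> walk_labels_from E w"
proof -
  obtain sq where sq0: "sq 0 = v" and walk: "\<forall>k. (sq k, sq (k + 1), z k) \<in> E"
    using assms unfolding walk_labels_from_def by blast
  have walk': "(sq (k + 1), sq (k + 1 + 1), z (k + 1)) \<in> E" for k
    using walk by blast
  have "(v, sq 1, z 0) \<in> E"
    using walk sq0 by (metis add_0)
  moreover have "shift z \<in> walk_labels_from E (sq 1)"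
    unfolding walk_labels_from_def shift_def
    using walk' by (intro CollectI exI[of _ "\<lambda>k. sq (k + 1)"]) simp
  ultimately show thesis by (rule that)
qed

lemma walk_labels_from_unshift:
  assumes "shift z \<in> walk_labels_from E w"
  obtains v where "(v, w, z 0) \<in> E" and "z \<in> walk_labels_from E v"
proof -
  obtain sq where sq0: "sq 0 = w" and walk: "\<forall>k. (sq k, sq (k + 1), z (k + 1)) \<in> E"
    using assms unfolding walk_labels_from_def shift_def by blast
  have walk': "(sq (k - 1), sq k, z k) \<in> E" for k
    using walk[rule_format, of "k - 1"] by simp
  have "(sq (-1), w, z 0) \<in> E"
    using walk'[of 0] sq0 by simp
  moreover have "z \<in> walk_labels_from E (sq (-1))"
    unfolding walk_labels_from_def
    using walk' by (intro CollectI exI[of _ "\<lambda>k. sq (k - 1)"]) simp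
  ultimately show thesis by (rule that)
qed

lemma walk_labels_from_start_in_nodes:
  assumes "labeled_graph S E" and "z \<in> walk_labels_from E v"
  shows "v \<in> S"
  using assms unfolding labeled_graph_def walk_labels_from_def by blast

lemma edge_target_in_nodes:
  assumes "labeled_graph S E" and "(v, w, i) \<in> E"
  shows "w \<in> S"
  using assms unfolding labeled_graph_def by blast

definition covering_indices :: "(nat \<Rightarrow> 'b set) \<Rightarrow> nat \<Rightarrow> 'b \<Rightarrow> nat set" where
  "covering_indices C K z = {j \<in> {1..K}. z \<in> C j}"

lemma finite_covering_indices: "finite (covering_indices C K z)"
  unfolding covering_indices_def by simp

context
  fixes Z C K S E s
  assumes cov: "graph_induced_covering Z C K S E s"
begin

private lemma covering_graph: "labeled_graph S E"
  and covering_node_index: "v \<in> S \<Longrightarrow> \<exists>j\<in>{1..K}. s j = v"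
  and covering_cell: "j \<in> {1..K} \<Longrightarrow> C j = walk_labels_from E (s j)"
  and covering_walks: "Z = walk_labels E"
  using cov unfolding graph_induced_covering_def bij_betw_def by auto

lemma covering_indices_nonempty:
  assumes "z \<in> Z"
  shows "covering_indices C K z \<noteq> {}"
proof -
  obtain sq where walk: "\<forall>k. (sq k, sq (k + 1), z k) \<in> E"
    using assms covering_walks unfolding walk_labels_def by blast
  then have "z \<in> walk_labels_from E (sq 0)"
    unfolding walk_labels_from_def by blast
  moreover obtain j where "j \<in> {1..K}" "s j = sq 0"
    using covering_node_index walk_labels_from_start_in_nodes[OF covering_graph calculation] by blast
  ultimately show ?thesis
    using covering_cell unfolding covering_indices_def by auto
qed

lemma covering_successor:
  assumes "j \<in> covering_indices C K z"
  shows "\<exists>l\<in>covering_indices C K (shift z). (s j, s l, z 0) \<in> E"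
proof -
  have j: "j \<in> {1..K}" "z \<in> walk_labels_from E (s j)"
    using assms covering_cell unfolding covering_indices_def by auto
  obtain w where edge: "(s j, w, z 0) \<in> E" and shifted: "shift z \<in> walk_labels_from E w"
    using walk_labels_from_shift[OF j(2)] .
  obtain l where "l \<in> {1..K}" "s l = w"
    using covering_node_index edge_target_in_nodes[OF covering_graph edge] by blast
  with edge shifted show ?thesis
    using covering_cell unfolding covering_indices_def by auto
qed

lemma covering_predecessor:
  assumes "l \<in> covering_indices C K (shift z)"
  shows "\<exists>j\<in>covering_indices C K z. (s j, s l, z 0) \<in> E"
proof -
  have l: "l \<in> {1..K}" "shift z \<in> walk_labels_from E (s l)"
    using assms covering_cell unfolding covering_indices_def by auto
  obtain v where edge: "(v, s l, z 0) \<in> E" and unshifted: "z \<in> walk_labels_from E v"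
    using walk_labels_from_unshift[OF l(2)] .
  obtain j where "j \<in> {1..K}" "s j = v"
    using covering_node_index walk_labels_from_start_in_nodes[OF covering_graph unshifted] by blast
  with edge unshifted show ?thesis
    using covering_cell unfolding covering_indices_def by auto
qed

end

lemma Min_image_le_mult:
  fixes g h :: "'i \<Rightarrow> 'r::linordered_idom"
  assumes "finite A" "finite B" "B \<noteq> {}"
    and "\<And>j. j \<in> B \<Longrightarrow> \<exists>l\<in>A. g l \<le> c * h j"
  shows "Min (g ` A) \<le> c * Min (h ` B)"
proof -
  obtain j where j: "j \<in> B" "h j = Min (h ` B)"
    using Min_in[of "h ` B"] assms(2,3) by fastforce
  then obtain l where "l \<in> A" "g l \<le> c * h j"
    using assms(4) by blast
  then show ?thesis
    using assms(1) j(2) by (metis Min_le dual_order.trans finite_imageI imageI)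
qed

lemma Max_image_le_mult:
  fixes g h :: "'i \<Rightarrow> 'r::linordered_idom"
  assumes "finite A" "finite B" "A \<noteq> {}" "0 \<le> c"
    and "\<And>l. l \<in> A \<Longrightarrow> \<exists>j\<in>B. g l \<le> c * h j"
  shows "Max (g ` A) \<le> c * Max (h ` B)"
proof -
  obtain l where l: "l \<in> A" "g l = Max (g ` A)"
    using Max_in[of "g ` A"] assms(1,3) by fastforce
  then obtain j where j: "j \<in> B" "g l \<le> c * h j"
    using assms(5) by blast
  have "c * h j \<le> c * Max (h ` B)"
    using assms(2,4) j(1) by (intro mult_left_mono Max_ge) auto
  with j(2) l(2) show ?thesis by simp
qed

theorem mainTheorem5:
  fixes Z :: "(int \<Rightarrow> 'a::countable) set"
    and f :: "real^'n \<Rightarrow> (int \<Rightarrow> 'a) \<Rightarrow> real^'n"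
    and C :: "nat \<Rightarrow> (int \<Rightarrow> 'a) set"
    and K :: nat
    and S :: "'v set"
    and E :: "('v \<times> 'v \<times> 'a) set"
    and s :: "nat \<Rightarrow> 'v"
    and W :: "real^'n \<Rightarrow> nat \<Rightarrow> real"
  assumes "sofic_shift Z"
    and "graph_induced_covering Z C K S E s"
    and "G_lyapunov f C K E s W"
  shows "seq_lyapunov f Z (\<lambda>x z. Min {W x j | j. j \<in> {1..K} \<and> z \<in> C j}) \<and>
         seq_lyapunov f Z (\<lambda>x z. Max {W x j | j. j \<in> {1..K} \<and> z \<in> C j})"
proof -
  let ?J = "covering_indices C K"
  obtain \<alpha>1 \<alpha>2 \<gamma> where K_inf: "class_K_inf \<alpha>1" "class_K_inf \<alpha>2" and \<gamma>: "0 \<le> \<gamma>" "\<gamma> < 1"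
    and bounds: "\<forall>x. \<forall>j\<in>{1..K}. \<alpha>1 (norm x) \<le> W x j \<and> W x j \<le> \<alpha>2 (norm x)"
    and decrease: "\<forall>x. \<forall>j\<in>{1..K}. \<forall>l\<in>{1..K}. \<forall>i. (s j, s l, i) \<in> E \<longrightarrow>
       (\<forall>z\<in>C j. z 0 = i \<longrightarrow> shift z \<in> C l \<longrightarrow> W (f x z) l \<le> \<gamma> * W x j)"
    using assms(3) unfolding G_lyapunov_def by (elim exE conjE) simp
  have image_eq: "{W x j | j. j \<in> {1..K} \<and> z \<in> C j} = W x ` ?J z" for x z
    unfolding covering_indices_def by blast
  have nonempty: "z \<in> Z \<Longrightarrow> ?J z \<noteq> {}" for z
    using covering_indices_nonempty[OF assms(2)] .
  have between: "\<alpha>1 (norm x) \<le> W x j \<and> W x j \<le> \<alpha>2 (norm x)" if "j \<in> ?J z" for x j z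
    using bounds that by (simp add: covering_indices_def)
  have edge_decrease: "W (f x z) l \<le> \<gamma> * W x j"
    if "j \<in> ?J z" "l \<in> ?J (shift z)" "(s j, s l, z 0) \<in> E" for x j l z
    using decrease that by (simp add: covering_indices_def)
  have Min_bounds: "\<alpha>1 (norm x) \<le> Min (W x ` ?J z) \<and> Min (W x ` ?J z) \<le> \<alpha>2 (norm x)"
    and Max_bounds: "\<alpha>1 (norm x) \<le> Max (W x ` ?J z) \<and> Max (W x ` ?J z) \<le> \<alpha>2 (norm x)"
    if "z \<in> Z" for x z
    using between[of _ z x] nonempty[OF that] finite_covering_indices[of C K z]
    by (auto simp: Min_le_iff Min_ge_iff Max_le_iff Max_ge_iff)
  have Min_decrease: "Min (W (f x z) ` ?J (shift z)) \<le> \<gamma> * Min (W x ` ?J z)" if "z \<in> Z" for x z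
    by (rule Min_image_le_mult[OF finite_covering_indices finite_covering_indices nonempty[OF that]])
      (meson covering_successor[OF assms(2)] edge_decrease)
  have Max_decrease: "Max (W (f x z) ` ?J (shift z)) \<le> \<gamma> * Max (W x ` ?J z)" if "z \<in> Z" for x z
  proof (rule Max_image_le_mult[OF finite_covering_indices finite_covering_indices _ \<gamma>(1)])
    show "?J (shift z) \<noteq> {}"
      using nonempty[OF that] covering_successor[OF assms(2)] by blast
  qed (meson covering_predecessor[OF assms(2)] edge_decrease)
  have "seq_lyapunov f Z (\<lambda>x z. Min (W x ` ?J z))"
    unfolding seq_lyapunov_def using K_inf \<gamma> Min_bounds Min_decrease by blast
  moreover have "seq_lyapunov f Z (\<lambda>x z. Max (W x ` ?J z))"
    unfolding seq_lyapunov_def using K_inf \<gamma> Max_bounds Max_decrease by blast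
  ultimately show ?thesis
    unfolding image_eq ..
qed

end
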